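(* Let $\mathbb{K}$ be a field and let $L_1,\ldots,L_k$ be nonzero operators in $\mathbb{K}[x]\langle\partial\rangle$. Let $s=\operatorname{ord}(L_1)+\cdots+\operatorname{ord}(L_k)$ and $d=\max_{1\le i\le k}\deg_x(L_i)$. If $L=\operatorname{lclm}(L_1,\ldots,L_k)$, then $\deg_x(L)\le d\,(k(s+1)-s)$.
   Context: $\mathbb{K}(x)\langle\partial\rangle$ is the ring of differential operators with coefficients in $\mathbb{K}(x)$ and $\partial a=a\partial+\frac{da}{dx}$; $\mathbb{K}[x]\langle\partial\rangle$ is the subring with polynomial coefficients. Order is degree in $\partial$; $\deg_x$ of a nonzero operator in $\mathbb{K}[x]\langle\partial\rangle$ is the maximal degree in $x$ of its coefficients. An LCLM of $L_1,\ldots,L_k$ is a nonzero common left multiple $Q_1L_1=\cdots=Q_kL_k$ ($Q_i\in\mathbb{K}(x)\langle\partial\rangle$) of least order; $\operatorname{lclm}(L_1,\ldots,L_k)$ is the LCLM normalised to lie in $\mathbb{K}[x]\langle\partial\rangle$ with coefficients having gcd $1$. *)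

theory Defs
  imports "HOL-Computational_Algebra.Polynomial" "HOL-Computational_Algebra.Fraction_Field"
begin

(* Linear differential operators  sum_i a_i \<partial>^i  with coefficients in a ring 'b carrying a
   derivation delta are represented as polynomials in \<partial> ('b poly): coeff A i = a_i,
   and the order of A is degree A.  Addition is polynomial addition; the (noncommutative)
   product is the Ore product determined by  \<partial> a = a \<partial> + delta a. *)

(* left multiplication by \<partial>:  \<partial> (sum b_j \<partial>^j) = sum (b_j \<partial>^(j+1) + delta(b_j) \<partial>^j) *)
definition dleft :: "('b::comm_ring_1 \<Rightarrow> 'b) \<Rightarrow> 'b poly \<Rightarrow> 'b poly" where
  "dleft delta B = pCons 0 B + map_poly delta B"

definition omult :: "('b::comm_ring_1 \<Rightarrow> 'b) \<Rightarrow> 'b poly \<Rightarrow> 'b poly \<Rightarrow> 'b poly" where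
  "omult delta A B = (\<Sum>i\<le>degree A. smult (coeff A i) ((dleft delta ^^ i) B))"

(* the derivation d/dx on K(x) = 'a poly fract, via the quotient rule (well defined) *)
definition fderiv :: "'a::field poly fract \<Rightarrow> 'a poly fract" where
  "fderiv r = (SOME s. \<forall>p q. q \<noteq> 0 \<longrightarrow> r = Fract p q \<longrightarrow>
                   s = Fract (pderiv p * q - p * pderiv q) (q * q))"

definition embed_op :: "'a::field poly poly \<Rightarrow> 'a poly fract poly" where
  "embed_op L = map_poly (\<lambda>c. Fract c 1) L"

definition degx :: "'a::field poly poly \<Rightarrow> nat" where
  "degx L = Max (degree ` set (coeffs L))"

definition common_left_multiple :: "'a::field poly poly list \<Rightarrow> 'a poly fract poly \<Rightarrow> bool" where
  "common_left_multiple Ls M \<longleftrightarrow>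
     (\<forall>Li\<in>set Ls. \<exists>Q. M = omult fderiv Q (embed_op Li))"

(* L = lclm(L_1,...,L_k): an LCLM (nonzero common left multiple of least order) lying in
   K[x]<\<partial>> whose coefficients have gcd 1 (unique up to a nonzero constant of K) *)
definition is_lclm :: "'a::field poly poly list \<Rightarrow> 'a poly poly \<Rightarrow> bool" where
  "is_lclm Ls L \<longleftrightarrow>
     L \<noteq> 0 \<and>
     common_left_multiple Ls (embed_op L) \<and>
     (\<forall>M. M \<noteq> 0 \<longrightarrow> common_left_multiple Ls M \<longrightarrow> degree L \<le> degree M) \<and>
     (\<forall>g. (\<forall>c\<in>set (coeffs L). g dvd c) \<longrightarrow> is_unit g)"

end

theory Submission
  imports Defs "HOL-Computational_Algebra.Polynomial_Factorial"
begin

text \<open>If \<open>L\<close> has order \<open>m\<close>, then \<open>L = Q\<^sub>i L\<^sub>i\<close> with \<open>ord Q\<^sub>i = m - ord L\<^sub>i\<close>.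
  Common left multiples of order at most \<open>M\<close> are the solutions of a linear system over \<open>K[x]\<close>
  in the \<open>N = \<Sum>\<^sub>i (M - ord L\<^sub>i + 1)\<close> coefficients of the cofactors, with \<open>(k - 1)(M + 1)\<close>
  equations whose entries, coefficients of the \<open>\<partial>\<^sup>e L\<^sub>i\<close>, have \<open>x\<close>-degree at most \<open>d\<close>.
  For \<open>M = s\<close> there are more unknowns than equations, whence \<open>m \<le> s\<close>. For \<open>M = m\<close> the
  cofactors of \<open>L\<close> give a nonzero solution over \<open>K(x)\<close>; restricting to independent equations and
  counting coefficients (Siegel's lemma) yields a solution in polynomials of degree at most
  \<open>d (N - 1)\<close>, i.e. a common left multiple of order \<open>m\<close> and \<open>x\<close>-degree at most \<open>d N\<close>. It is a
  \<open>K(x)\<close>-multiple of \<open>L\<close>, and \<open>L\<close> is primitive, so \<open>deg\<^sub>x L \<le> d N \<le> d (k (s + 1) - s)\<close>.\<close>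

subsection \<open>The Ore product\<close>

lemma coeff_dleft:
  "\<delta> 0 = 0 \<Longrightarrow> coeff (dleft \<delta> B) n = coeff (pCons 0 B) n + \<delta> (coeff B n)"
  unfolding dleft_def by (simp add: coeff_map_poly)

lemma degree_dleft_le: "degree (dleft \<delta> B) \<le> degree B + 1"
  unfolding dleft_def
  by (rule degree_add_le) (use degree_pCons_le[of 0 B] map_poly_degree_leq[of \<delta> B] in simp_all)

lemma degree_dleft_pow_le: "degree ((dleft \<delta> ^^ e) B) \<le> degree B + e"
  by (induction e) (auto intro: order.trans[OF degree_dleft_le])

lemma coeff_dleft_pow_eq_0: "degree B + e < n \<Longrightarrow> coeff ((dleft \<delta> ^^ e) B) n = 0"
  using degree_dleft_pow_le[where \<delta>=\<delta> and e=e and B=B] by (intro coeff_eq_0) simp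

lemma coeff_dleft_pow_top:
  assumes "\<delta> 0 = 0"
  shows "coeff ((dleft \<delta> ^^ e) B) (degree B + e) = lead_coeff B"
proof (induction e)
  case (Suc e)
  have "\<delta> (coeff ((dleft \<delta> ^^ e) B) (degree B + Suc e)) = 0"
    using coeff_dleft_pow_eq_0[where \<delta>=\<delta> and B=B and e=e] assms by simp
  with Suc show ?case by (simp add: coeff_dleft[where \<delta>=\<delta>, OF assms])
qed simp

lemma coeff_omult:
  assumes "degree Q \<le> D"
  shows "coeff (omult \<delta> Q B) n = (\<Sum>e\<le>D. coeff Q e * coeff ((dleft \<delta> ^^ e) B) n)"
  unfolding omult_def coeff_sum coeff_smult
  by (rule sum.mono_neutral_left) (use assms in \<open>auto simp: coeff_eq_0\<close>)

lemma degree_omult_le: "degree (omult \<delta> Q B) \<le> degree Q + degree B"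
  by (rule degree_le)
    (auto simp: coeff_omult[OF order.refl] coeff_dleft_pow_eq_0 intro!: sum.neutral)

lemma coeff_omult_top:
  assumes "\<delta> 0 = 0"
  shows "coeff (omult \<delta> Q B) (degree Q + degree B) = lead_coeff Q * lead_coeff B"
proof -
  have "coeff (omult \<delta> Q B) (degree Q + degree B)
      = (\<Sum>e\<le>degree Q. coeff Q e * coeff ((dleft \<delta> ^^ e) B) (degree Q + degree B))"
    by (rule coeff_omult) simp
  also have "\<dots> = lead_coeff Q * coeff ((dleft \<delta> ^^ degree Q) B) (degree B + degree Q)"
    by (subst sum.remove[of _ "degree Q"])
      (auto simp: coeff_dleft_pow_eq_0 add.commute intro!: sum.neutral)
  finally show ?thesis by (simp add: coeff_dleft_pow_top[where \<delta>=\<delta>, OF assms])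
qed

lemma degree_omult:
  fixes Q B :: "'b::idom poly"
  assumes "\<delta> 0 = 0" "Q \<noteq> 0" "B \<noteq> 0"
  shows "degree (omult \<delta> Q B) = degree Q + degree B"
  using coeff_omult_top[of \<delta> Q B] assms degree_omult_le[of \<delta> Q B]
  by (intro antisym le_degree) simp_all

lemma omult_eq_0_iff:
  fixes Q B :: "'b::idom poly"
  assumes "\<delta> 0 = 0" "B \<noteq> 0"
  shows "omult \<delta> Q B = 0 \<longleftrightarrow> Q = 0"
proof
  assume "omult \<delta> Q B = 0"
  then show "Q = 0" using coeff_omult_top[of \<delta> Q B] assms by (cases "Q = 0") auto
qed (simp add: omult_def)

lemma omult_diff_left:
  "omult \<delta> (smult a P - smult b Q) B = smult a (omult \<delta> P B) - smult b (omult \<delta> Q B)"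
proof (rule poly_eqI)
  fix n
  define D where "D = max (degree P) (degree Q)"
  have "degree (smult a P - smult b Q) \<le> D"
    unfolding D_def by (meson degree_diff_le degree_smult_le le_max_iff_disj)
  then show "coeff (omult \<delta> (smult a P - smult b Q) B) n
      = coeff (smult a (omult \<delta> P B) - smult b (omult \<delta> Q B)) n"
    by (simp add: coeff_omult[of _ D] D_def sum_distrib_left sum_subtractf[symmetric]
        algebra_simps)
qed

subsection \<open>Operators with polynomial coefficients inside \<open>K(x)\<langle>\<partial>\<rangle>\<close>\<close>

lemma embed_op_eq_fract_poly [simp]: "embed_op = fract_poly"
  by (simp add: fun_eq_iff embed_op_def to_fract_def[abs_def])

lemma fderiv_to_fract [simp]: "fderiv (to_fract c) = to_fract (pderiv c)"
  unfolding fderiv_def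
proof (rule some_equality)
  show "\<forall>p q. q \<noteq> 0 \<longrightarrow> to_fract c = Fract p q \<longrightarrow>
          to_fract (pderiv c) = Fract (pderiv p * q - p * pderiv q) (q * q)"
  proof (intro allI impI)
    fix p q :: "'a poly" assume "q \<noteq> 0" and "to_fract c = Fract p q"
    then have "p = c * q" by (simp add: to_fract_def eq_fract)
    then show "to_fract (pderiv c) = Fract (pderiv p * q - p * pderiv q) (q * q)"
      using \<open>q \<noteq> 0\<close> by (simp add: to_fract_def eq_fract pderiv_mult algebra_simps)
  qed
next
  fix s assume "\<forall>p q. q \<noteq> 0 \<longrightarrow> to_fract c = Fract p q \<longrightarrow>
                  s = Fract (pderiv p * q - p * pderiv q) (q * q)"
  from this[rule_format, of 1 c] show "s = to_fract (pderiv c)" by (simp add: to_fract_def)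
qed

lemma fderiv_0 [simp]: "fderiv 0 = 0"
  using fderiv_to_fract[of 0] by simp

lemma degree_fract_poly [simp]: "degree (fract_poly p) = degree p"
  by (rule degree_map_poly) simp

lemma dleft_pow_fract_poly:
  "(dleft fderiv ^^ e) (fract_poly B) = fract_poly ((dleft pderiv ^^ e) B)"
proof (induction e)
  case (Suc e)
  show ?case
    by (rule poly_eqI) (simp add: Suc coeff_dleft coeff_map_poly coeff_pCons split: nat.split)
qed simp

lemma omult_fract_poly:
  "fract_poly (omult pderiv Q B) = omult fderiv (fract_poly Q) (fract_poly B)"
  by (rule poly_eqI)
    (simp add: coeff_map_poly coeff_omult[OF order.refl] coeff_omult[of "fract_poly Q" "degree Q"]
      dleft_pow_fract_poly)

subsection \<open>\<open>x\<close>-degrees\<close>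

lemma degree_coeff_le_degx: "degree (coeff L n) \<le> degx L"
proof (cases "coeff L n = 0")
  case False
  then have "coeff L n \<in> set (coeffs L)"
    by (intro coeff_in_coeffs) (auto intro: le_degree)
  then show ?thesis unfolding degx_def by simp
qed simp

lemma degx_le:
  assumes "L \<noteq> 0" "\<And>n. degree (coeff L n) \<le> D"
  shows "degx L \<le> D"
  unfolding degx_def using assms
  by (auto simp: Max_le_iff) (metis image_iff insertCI range_coeff)

lemma degx_le_degx_smult:
  assumes "u \<noteq> 0" "L \<noteq> 0"
  shows "degx L \<le> degx (smult u L)"
proof (rule degx_le[OF assms(2)])
  fix n
  have "degree (coeff L n) \<le> degree (coeff (smult u L) n)"
    using assms(1) by (cases "coeff L n = 0") (simp_all add: degree_mult_eq)
  then show "degree (coeff L n) \<le> degx (smult u L)"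
    using degree_coeff_le_degx order.trans by blast
qed

lemma degree_pderiv_le: "degree (pderiv p) \<le> degree p"
  by (rule degree_le) (simp add: coeff_pderiv coeff_eq_0)

lemma degree_coeff_dleft_pow_le:
  assumes "\<And>n. degree (coeff B n) \<le> D"
  shows "degree (coeff ((dleft pderiv ^^ e) B) n) \<le> D"
proof (induction e arbitrary: n)
  case (Suc e)
  have "degree (coeff (pCons 0 ((dleft pderiv ^^ e) B)) n) \<le> D"
    using Suc by (cases n) simp_all
  moreover have "degree (pderiv (coeff ((dleft pderiv ^^ e) B) n)) \<le> D"
    using Suc[of n] degree_pderiv_le[of "coeff ((dleft pderiv ^^ e) B) n"] by linarith
  ultimately show ?case by (simp add: coeff_dleft degree_add_le)
qed (use assms in simp)

subsection \<open>Common left multiples\<close>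

lemma common_left_multiple_diff:
  assumes "common_left_multiple Ls M" "common_left_multiple Ls M'"
  shows "common_left_multiple Ls (smult a M - smult b M')"
  unfolding common_left_multiple_def
proof
  fix Li assume "Li \<in> set Ls"
  with assms obtain Q Q' where "M = omult fderiv Q (embed_op Li)" "M' = omult fderiv Q' (embed_op Li)"
    unfolding common_left_multiple_def by blast
  then have "smult a M - smult b M' = omult fderiv (smult a Q - smult b Q') (embed_op Li)"
    by (simp add: omult_diff_left)
  then show "\<exists>Q. smult a M - smult b M' = omult fderiv Q (embed_op Li)" ..
qed

lemma common_left_multiple_fract_poly:
  assumes "\<And>i. i < length Ls \<Longrightarrow> M = omult pderiv (C i) (Ls ! i)"
  shows "common_left_multiple Ls (fract_poly M)"
  unfolding common_left_multiple_def
proof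
  fix Li assume "Li \<in> set Ls"
  then obtain i where "i < length Ls" "Li = Ls ! i" by (auto simp: in_set_conv_nth)
  with assms have "fract_poly M = omult fderiv (fract_poly (C i)) (embed_op Li)"
    by (simp add: omult_fract_poly)
  then show "\<exists>Q. fract_poly M = omult fderiv Q (embed_op Li)" ..
qed

lemma left_factor_degree:
  fixes Li :: "'a::field poly poly"
  assumes "M = omult fderiv Q (fract_poly Li)" "M \<noteq> 0" "Li \<noteq> 0"
  shows "Q \<noteq> 0" "degree Q + degree Li = degree M"
proof -
  show "Q \<noteq> 0"
  proof
    assume "Q = 0"
    with assms(1,2) show False by (simp add: omult_def)
  qed
  then show "degree Q + degree Li = degree M"
    using assms by (simp add: degree_omult)
qed

lemma smult_coeff_cross:
  fixes p q :: "'b::idom poly"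
  assumes "smult a p = smult b q" "a \<noteq> 0"
  shows "smult (coeff q m) p = smult (coeff p m) q"
proof (rule poly_eqI)
  fix n
  have "a * coeff p k = b * coeff q k" for k
    using arg_cong[OF assms(1), of "\<lambda>r. coeff r k"] by simp
  from this[of n] this[of m] have "a * (coeff q m * coeff p n) = a * (coeff p m * coeff q n)"
    by algebra
  then show "coeff (smult (coeff q m) p) n = coeff (smult (coeff p m) q) n"
    using assms(2) by simp
qed

text \<open>Without a \<open>gcd\<close> on \<open>K[x]\<close> at hand, we argue with the ideal of all \<open>t\<close> such that
  \<open>t p\<close> is a polynomial multiple of \<open>q\<close>: if \<open>t\<^sub>0 p = s\<^sub>0 q\<close> with \<open>t\<^sub>0\<close> of least degree,
  then \<open>s\<^sub>0\<close> divides every coefficient of \<open>p\<close>.\<close>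

lemma least_multiplier_dvd_coeff:
  fixes p q :: "'a::field poly poly"
  assumes cross: "\<And>m. smult (coeff q m) p = smult (coeff p m) q" and "q \<noteq> 0"
    and t0: "smult t0 p = smult s0 q" "t0 \<noteq> 0"
    and least: "\<And>t s. smult t p = smult s q \<Longrightarrow> t \<noteq> 0 \<Longrightarrow> degree t0 \<le> degree t"
  shows "s0 dvd coeff p m"
proof -
  define c r where "c = coeff q m div t0" and "r = coeff q m mod t0"
  have "coeff q m = c * t0 + r" by (simp add: c_def r_def)
  then have "smult r p = smult (coeff q m) p - smult c (smult t0 p)"
    by (simp add: smult_add_left)
  also have "\<dots> = smult (coeff p m - c * s0) q"
    by (simp add: cross t0(1) smult_diff_left)
  finally have r: "smult r p = smult (coeff p m - c * s0) q" .
  have "r = 0"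
  proof (rule ccontr)
    assume "r \<noteq> 0"
    then have "degree r < degree t0" using degree_mod_less'[OF t0(2)] by (simp add: r_def)
    with least[OF r \<open>r \<noteq> 0\<close>] show False by simp
  qed
  with r \<open>q \<noteq> 0\<close> have "coeff p m = c * s0" by simp
  then show ?thesis by simp
qed

lemma primitive_smult_eq_smultE:
  fixes p q :: "'a::field poly poly"
  assumes prim: "\<forall>g. (\<forall>c\<in>set (coeffs p). g dvd c) \<longrightarrow> is_unit g"
    and eq: "smult a p = smult b q" and "a \<noteq> 0"
  obtains u where "q = smult u p"
proof -
  have "p \<noteq> 0"
  proof
    assume "p = 0"
    with prim[rule_format, of 0] show False by simp
  qed
  then have "q \<noteq> 0" using eq \<open>a \<noteq> 0\<close> by auto
  obtain t0 where t0: "(\<exists>s. smult t0 p = smult s q) \<and> t0 \<noteq> 0"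
    and least: "\<And>t. (\<exists>s. smult t p = smult s q) \<and> t \<noteq> 0 \<Longrightarrow> degree t0 \<le> degree t"
    using ex_has_least_nat[of "\<lambda>t. (\<exists>s. smult t p = smult s q) \<and> t \<noteq> 0" a degree] eq \<open>a \<noteq> 0\<close>
    by blast
  then obtain s0 where s0: "smult t0 p = smult s0 q" by blast
  have "s0 dvd coeff p m" for m
    using least_multiplier_dvd_coeff[OF smult_coeff_cross[OF eq \<open>a \<noteq> 0\<close>] \<open>q \<noteq> 0\<close> s0] t0 least
    by blast
  then have "\<forall>c\<in>set (coeffs p). s0 dvd c" by (metis image_iff insertCI range_coeff)
  with prim have "is_unit s0" by blast
  then obtain w where "1 = s0 * w" by (elim dvdE)
  then have "q = smult w (smult t0 p)" by (simp add: s0 mult.commute)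
  then have "q = smult (w * t0) p" by simp
  then show ?thesis by (rule that)
qed

lemma is_lclmD:
  assumes "is_lclm Ls L"
  shows "L \<noteq> 0" "common_left_multiple Ls (fract_poly L)"
    "\<And>M. M \<noteq> 0 \<Longrightarrow> common_left_multiple Ls M \<Longrightarrow> degree L \<le> degree M"
  using assms by (simp_all add: is_lclm_def)

text \<open>Such an \<open>M\<close> is a \<open>K(x)\<close>-multiple of the LCLM, which is primitive.\<close>

lemma is_lclm_degx_le:
  assumes lclm: "is_lclm Ls L" and M: "common_left_multiple Ls (fract_poly M)" "M \<noteq> 0"
    and deg: "degree M \<le> degree L"
  shows "degx L \<le> degx M"
proof -
  note L = is_lclmD(1,2)[OF lclm] and minimal = is_lclmD(3)[OF lclm]
  have primitive: "\<forall>g. (\<forall>c\<in>set (coeffs L). g dvd c) \<longrightarrow> is_unit g"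
    using lclm by (simp add: is_lclm_def)
  have degM: "degree M = degree L"
    using minimal[of "fract_poly M"] M deg by simp
  define D where "D = smult (to_fract (lead_coeff M)) (fract_poly L)
                        - smult (to_fract (lead_coeff L)) (fract_poly M)"
  have "D = 0"
  proof (rule ccontr)
    assume "D \<noteq> 0"
    moreover have "common_left_multiple Ls D"
      unfolding D_def using L(2) M(1) by (rule common_left_multiple_diff)
    ultimately have "degree L \<le> degree D" by (rule minimal)
    moreover have "degree D \<le> degree L"
      unfolding D_def using degM
      by (intro degree_diff_le order.trans[OF degree_smult_le]) simp_all
    ultimately have "lead_coeff D = coeff D (degree L)" by simp
    also have "\<dots> = 0"
      unfolding D_def using degM by (simp add: coeff_map_poly mult.commute)
    finally show False using \<open>D \<noteq> 0\<close> by simp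
  qed
  then have "fract_poly (smult (lead_coeff M) L) = fract_poly (smult (lead_coeff L) M)"
    unfolding D_def by simp
  then have "smult (lead_coeff M) L = smult (lead_coeff L) M"
    by (simp only: fract_poly_eq_iff)
  moreover have "lead_coeff M \<noteq> 0" using M(2) by simp
  ultimately obtain u where "M = smult u L"
    by (rule primitive_smult_eq_smultE[OF primitive])
  moreover from this M(2) have "u \<noteq> 0" by auto
  ultimately show ?thesis using L(1) by (simp add: degx_le_degx_smult)
qed

subsection \<open>Homogeneous linear systems\<close>

lemma homogeneous_system_nontrivial_solution:
  fixes c :: "'r \<Rightarrow> 'c \<Rightarrow> 'f::field"
  assumes "finite I" "finite J" "card I < card J"
  shows "\<exists>x. (\<exists>j\<in>J. x j \<noteq> 0) \<and> (\<forall>i\<in>I. (\<Sum>j\<in>J. c i j * x j) = 0)"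
  using assms
proof (induction I arbitrary: J c rule: finite_induct)
  case empty
  then obtain j where "j \<in> J" by fastforce
  then show ?case by (intro exI[of _ "\<lambda>j'. if j' = j then 1 else 0"]) auto
next
  case (insert i I)
  show ?case
  proof (cases "\<forall>j\<in>J. c i j = 0")
    case True
    have "card I < card J" using insert by simp
    with insert.IH[of J c] insert.prems obtain x where
      "\<exists>j\<in>J. x j \<noteq> 0" "\<forall>r\<in>I. (\<Sum>j\<in>J. c r j * x j) = 0"
      by blast
    with True show ?thesis by (intro exI[of _ x]) simp
  next
    case False
    then obtain j0 where j0: "j0 \<in> J" "c i j0 \<noteq> 0" by blast
    define c' where "c' = (\<lambda>r j. c r j - c r j0 / c i j0 * c i j)"
    have "card I < card (J - {j0})" using insert j0 by (simp add: card_Diff_singleton)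
    with insert.IH[of "J - {j0}" c'] insert.prems obtain x' where x':
      "\<exists>j\<in>J - {j0}. x' j \<noteq> 0" "\<forall>r\<in>I. (\<Sum>j\<in>J - {j0}. c' r j * x' j) = 0"
      by blast
    define x where "x = x'(j0 := - (\<Sum>j\<in>J - {j0}. c i j * x' j) / c i j0)"
    text \<open>Eliminating the unknown \<open>x j0\<close> with row \<open>i\<close> turns every row \<open>r\<close> into row \<open>c' r\<close>.\<close>
    have row: "(\<Sum>j\<in>J. c r j * x j) = (\<Sum>j\<in>J - {j0}. c' r j * x' j)" for r
    proof -
      have "(\<Sum>j\<in>J. c r j * x j) = c r j0 * x j0 + (\<Sum>j\<in>J - {j0}. c r j * x' j)"
        using j0 insert.prems(1) by (simp add: sum.remove x_def)
      also have "\<dots> = (\<Sum>j\<in>J - {j0}. c' r j * x' j)"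
        using j0(2) by (simp add: x_def c'_def algebra_simps sum_subtractf sum_distrib_left sum_divide_distrib)
      finally show ?thesis .
    qed
    have "c' i j = 0" for j using j0(2) by (simp add: c'_def)
    with x' row show ?thesis by (intro exI[of _ x]) (auto simp: x_def)
  qed
qed

definition rows_independent :: "('r \<Rightarrow> 'c \<Rightarrow> 'f::field) \<Rightarrow> 'c set \<Rightarrow> 'r set \<Rightarrow> bool" where
  "rows_independent a J S \<longleftrightarrow> (\<forall>l. (\<forall>j\<in>J. (\<Sum>i\<in>S. l i * a i j) = 0) \<longrightarrow> (\<forall>i\<in>S. l i = 0))"

lemma maximal_independent_rows:
  fixes a :: "'r \<Rightarrow> 'c \<Rightarrow> 'f::field"
  assumes "finite R" "finite J"
  obtains S where "S \<subseteq> R" "rows_independent a J S"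
    "\<And>r x. r \<in> R \<Longrightarrow> \<forall>i\<in>S. (\<Sum>j\<in>J. a i j * x j) = 0 \<Longrightarrow> (\<Sum>j\<in>J. a r j * x j) = 0"
proof -
  define X where "X = {S. S \<subseteq> R \<and> rows_independent a J S}"
  have "finite X" unfolding X_def using assms(1) by simp
  moreover have "{} \<in> X" unfolding X_def rows_independent_def by simp
  ultimately obtain S where S: "S \<in> X" and maximal: "\<And>T. T \<in> X \<Longrightarrow> S \<subseteq> T \<Longrightarrow> S = T"
    using finite_has_maximal[of X] by blast
  then have SR: "S \<subseteq> R" and indep: "rows_independent a J S" by (auto simp: X_def)
  have "finite S" using SR assms(1) finite_subset by blast
  show ?thesis
  proof (rule that[OF SR indep])
    fix r x assume r: "r \<in> R" and hx: "\<forall>i\<in>S. (\<Sum>j\<in>J. a i j * x j) = 0"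
    show "(\<Sum>j\<in>J. a r j * x j) = 0"
    proof (cases "r \<in> S")
      case False
      have "insert r S \<notin> X" using maximal[of "insert r S"] False by blast
      then have "\<not> rows_independent a J (insert r S)" using SR r by (simp add: X_def)
      then obtain l where "\<forall>j\<in>J. (\<Sum>i\<in>insert r S. l i * a i j) = 0"
          and l_nonzero: "\<exists>i\<in>insert r S. l i \<noteq> 0"
        unfolding rows_independent_def by blast
      then have l: "\<forall>j\<in>J. l r * a r j + (\<Sum>i\<in>S. l i * a i j) = 0"
        using \<open>finite S\<close> False by simp
      have "l r \<noteq> 0"
      proof
        assume "l r = 0"
        then have "\<forall>i\<in>S. l i = 0" using l indep unfolding rows_independent_def by simp
        then show False using l_nonzero \<open>l r = 0\<close> by auto
      qed
      have "0 = (\<Sum>j\<in>J. (l r * a r j + (\<Sum>i\<in>S. l i * a i j)) * x j)"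
        using l by simp
      also have "\<dots> = l r * (\<Sum>j\<in>J. a r j * x j) + (\<Sum>i\<in>S. l i * (\<Sum>j\<in>J. a i j * x j))"
        by (simp add: distrib_right sum.distrib sum_distrib_left sum_distrib_right
            sum.swap[of _ S J] mult.assoc)
      finally show ?thesis using hx \<open>l r \<noteq> 0\<close> by simp
    qed (use hx in simp)
  qed
qed

lemma card_independent_rows_less:
  fixes a :: "'r \<Rightarrow> 'c \<Rightarrow> 'f::field"
  assumes "finite J" "finite S" "rows_independent a J S" "j0 \<in> J" "w j0 \<noteq> 0"
    and w: "\<forall>i\<in>S. (\<Sum>j\<in>J. a i j * w j) = 0"
  shows "card S < card J"
proof (rule ccontr)
  assume "\<not> card S < card J"
  moreover have "card J > 0" using assms(1,4) card_gt_0_iff by blast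
  ultimately have "card (J - {j0}) < card S" using assms(1,4) by (simp add: card_Diff_singleton)
  then obtain l where l: "\<exists>i\<in>S. l i \<noteq> 0" "\<forall>j\<in>J - {j0}. (\<Sum>i\<in>S. a i j * l i) = 0"
    using homogeneous_system_nontrivial_solution[of "J - {j0}" S "\<lambda>j i. a i j"] assms(1,2)
    by auto
  text \<open>The combination \<open>l\<close> of the rows vanishes off \<open>j0\<close>, hence also at \<open>j0\<close> since \<open>w\<close>
    is a solution with \<open>w j0 \<noteq> 0\<close>.\<close>
  have "(\<Sum>i\<in>S. l i * a i j0) * w j0 = (\<Sum>i\<in>S. l i * (\<Sum>j\<in>J. a i j * w j))"
  proof -
    have "(\<Sum>i\<in>S. l i * (\<Sum>j\<in>J. a i j * w j))
        = (\<Sum>i\<in>S. l i * (a i j0 * w j0)) + (\<Sum>j\<in>J - {j0}. (\<Sum>i\<in>S. a i j * l i) * w j)"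
      using assms(1,4)
      by (simp add: sum.remove distrib_left sum.distrib sum_distrib_left sum_distrib_right
          sum.swap[of _ S "J - {j0}"] algebra_simps)
    then show ?thesis using l(2) by (simp add: sum_distrib_right mult.assoc)
  qed
  then have "\<forall>j\<in>J. (\<Sum>i\<in>S. l i * a i j) = 0"
    using w l(2) assms(5) by (auto simp: mult.commute)
  then show False using assms(3) l(1) unfolding rows_independent_def by blast
qed

subsection \<open>Polynomial solutions of bounded degree\<close>

lemma coeff_sum_mult_expansion:
  fixes a v :: "'c \<Rightarrow> 'b::comm_ring_1 poly"
  assumes "finite J" "\<And>j. degree (v j) \<le> D"
  shows "coeff (\<Sum>j\<in>J. a j * v j) t
    = (\<Sum>(j, e)\<in>J \<times> {..D}. (if e \<le> t then coeff (a j) (t - e) else 0) * coeff (v j) e)"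
proof -
  have high: "coeff (v j) e = 0" if "D < e" for j e
    using assms(2)[of j] that by (simp add: coeff_eq_0)
  have "coeff (a j * v j) t = (\<Sum>e\<le>D. (if e \<le> t then coeff (a j) (t - e) else 0) * coeff (v j) e)"
    for j
  proof -
    have "coeff (a j * v j) t = (\<Sum>e\<le>t. coeff (v j) e * coeff (a j) (t - e))"
      by (simp add: coeff_mult mult.commute[of "a j"])
    also have "\<dots> = (\<Sum>e\<le>max t D. (if e \<le> t then coeff (a j) (t - e) else 0) * coeff (v j) e)"
      by (rule sum.mono_neutral_cong_left) auto
    also have "\<dots> = (\<Sum>e\<le>D. (if e \<le> t then coeff (a j) (t - e) else 0) * coeff (v j) e)"
      by (rule sum.mono_neutral_cong_right) (auto simp: high)
    finally show ?thesis .
  qed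
  then show ?thesis by (simp add: coeff_sum sum.cartesian_product)
qed

lemma siegel_count_less:
  fixes s N d :: nat
  assumes "s < N"
  shows "s * (d * (N - 1) + d + 1) < N * (d * (N - 1) + 1)"
proof -
  obtain M where N: "N = Suc M" using assms by (cases N) auto
  have "s * (d * M + d + 1) \<le> M * (d * M + d + 1)"
    using assms N by (intro mult_le_mono1) simp
  also have "\<dots> < Suc M * (d * M + 1)" by (simp add: algebra_simps)
  finally show ?thesis using N by simp
qed

lemma bounded_polynomial_solution:
  fixes a :: "'r \<Rightarrow> 'c \<Rightarrow> 'a::field poly"
  assumes "finite S" "finite J" "card S < card J"
    and deg: "\<forall>i\<in>S. \<forall>j\<in>J. degree (a i j) \<le> d"
  obtains v where "\<exists>j\<in>J. v j \<noteq> 0" "\<forall>j. degree (v j) \<le> d * (card J - 1)"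
    "\<forall>i\<in>S. (\<Sum>j\<in>J. a i j * v j) = 0"
proof -
  define D where "D = d * (card J - 1)"
  text \<open>Unknowns: the coefficients of \<open>v j\<close> below \<open>D\<close>; equations: the coefficients of
    the row sums below \<open>D + d\<close>. The choice of \<open>D\<close> makes the equations fewer.\<close>
  define c where "c = (\<lambda>(i, t) (j, e). if e \<le> t then coeff (a i j) (t - e) else 0)"
  have "card S * (D + d + 1) < card J * (D + 1)"
    unfolding D_def using assms(3) by (rule siegel_count_less)
  then obtain y where y: "\<exists>je\<in>J \<times> {..D}. y je \<noteq> 0"
      "\<forall>it\<in>S \<times> {..D + d}. (\<Sum>je\<in>J \<times> {..D}. c it je * y je) = 0"
    using homogeneous_system_nontrivial_solution[of "S \<times> {..D + d}" "J \<times> {..D}" c] assms(1,2)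
    by (auto simp: card_cartesian_product)
  define v where "v = (\<lambda>j. \<Sum>e\<le>D. monom (y (j, e)) e)"
  have coeff_v: "coeff (v j) e = (if e \<le> D then y (j, e) else 0)" for j e
    unfolding v_def coeff_sum by (simp add: coeff_monom)
  have deg_v: "degree (v j) \<le> D" for j
    by (rule degree_le) (simp add: coeff_v)
  show ?thesis
  proof (rule that)
    show "\<exists>j\<in>J. v j \<noteq> 0" using y(1) by (force simp: poly_eq_iff coeff_v)
    show "\<forall>j. degree (v j) \<le> d * (card J - 1)" using deg_v by (simp add: D_def)
    show "\<forall>i\<in>S. (\<Sum>j\<in>J. a i j * v j) = 0"
    proof (intro ballI poly_eqI)
      fix i t assume i: "i \<in> S"
      show "coeff (\<Sum>j\<in>J. a i j * v j) t = coeff 0 t"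
      proof (cases "t \<le> D + d")
        case True
        have "coeff (\<Sum>j\<in>J. a i j * v j) t = (\<Sum>je\<in>J \<times> {..D}. c (i, t) je * y je)"
          unfolding coeff_sum_mult_expansion[OF assms(2) deg_v]
          by (rule sum.cong) (auto simp: c_def coeff_v)
        also have "\<dots> = 0" using y(2) i True by simp
        finally show ?thesis by simp
      next
        case False
        have "degree (a i j * v j) < t" if "j \<in> J" for j
          using degree_mult_le[of "a i j" "v j"] deg i that deg_v[of j] False by fastforce
        then show ?thesis by (simp add: coeff_sum coeff_eq_0)
      qed
    qed
  qed
qed

lemma polynomial_solution_of_fract_solution:
  fixes a :: "'r \<Rightarrow> 'c \<Rightarrow> 'a::field poly" and w :: "'c \<Rightarrow> 'a poly fract"
  assumes "finite R" "finite J" "j0 \<in> J" "w j0 \<noteq> 0"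
    and w: "\<forall>i\<in>R. (\<Sum>j\<in>J. to_fract (a i j) * w j) = 0"
    and deg: "\<forall>i\<in>R. \<forall>j\<in>J. degree (a i j) \<le> d"
  obtains v where "\<exists>j\<in>J. v j \<noteq> 0" "\<forall>j. degree (v j) \<le> d * (card J - 1)"
    "\<forall>i\<in>R. (\<Sum>j\<in>J. a i j * v j) = 0"
proof -
  obtain S where S: "S \<subseteq> R" "rows_independent (\<lambda>i j. to_fract (a i j)) J S"
    and spanning: "\<And>r x. r \<in> R \<Longrightarrow> \<forall>i\<in>S. (\<Sum>j\<in>J. to_fract (a i j) * x j) = 0
                     \<Longrightarrow> (\<Sum>j\<in>J. to_fract (a r j) * x j) = 0"
    using maximal_independent_rows[OF assms(1,2)] by blast
  have "finite S" using S(1) assms(1) finite_subset by blast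
  moreover have "card S < card J"
    by (rule card_independent_rows_less[where w=w, OF assms(2) \<open>finite S\<close> S(2) assms(3,4)])
      (use S(1) w in blast)
  ultimately obtain v where v: "\<exists>j\<in>J. v j \<noteq> 0" "\<forall>j. degree (v j) \<le> d * (card J - 1)"
      "\<forall>i\<in>S. (\<Sum>j\<in>J. a i j * v j) = 0"
    using bounded_polynomial_solution[OF _ assms(2), of S a d] deg S(1) by blast
  have "(\<Sum>j\<in>J. a r j * v j) = 0" if "r \<in> R" for r
    using spanning[OF that, of "\<lambda>j. to_fract (v j)"] v(3)
    by (simp flip: to_fract_mult to_fract_sum)
  with v(1,2) show ?thesis by (intro that) auto
qed

subsection \<open>The linear system for common left multiples\<close>

text \<open>A vector \<open>v\<close> on \<open>cofactor_unknowns Ls M\<close> encodes cofactors \<open>Q\<^sub>i = cofactor Ls M v i\<close>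
  of order at most \<open>M - ord L\<^sub>i\<close>; equation \<open>(i, n)\<close> says that \<open>Q\<^sub>0 L\<^sub>0\<close> and \<open>Q\<^sub>i L\<^sub>i\<close> have
  the same coefficient of \<open>\<partial>\<^sup>n\<close>.\<close>

definition cofactor_unknowns :: "'a::field poly poly list \<Rightarrow> nat \<Rightarrow> (nat \<times> nat) set" where
  "cofactor_unknowns Ls M = (SIGMA i:{..<length Ls}. {..M - degree (Ls ! i)})"

definition cofactor_equations :: "'a::field poly poly list \<Rightarrow> nat \<Rightarrow> (nat \<times> nat) set" where
  "cofactor_equations Ls M = {1..<length Ls} \<times> {..M}"

definition cofactor_matrix :: "'a::field poly poly list \<Rightarrow> nat \<times> nat \<Rightarrow> nat \<times> nat \<Rightarrow> 'a poly" where
  "cofactor_matrix Ls = (\<lambda>(i, n) (i', e).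
     (if i' = 0 then coeff ((dleft pderiv ^^ e) (Ls ! 0)) n else 0)
     - (if i' = i then coeff ((dleft pderiv ^^ e) (Ls ! i)) n else 0))"

definition cofactor :: "'a::field poly poly list \<Rightarrow> nat \<Rightarrow> (nat \<times> nat \<Rightarrow> 'a poly) \<Rightarrow> nat \<Rightarrow> 'a poly poly" where
  "cofactor Ls M v i = (\<Sum>e\<le>M - degree (Ls ! i). monom (v (i, e)) e)"

lemma finite_cofactor_unknowns [simp]: "finite (cofactor_unknowns Ls M)"
  by (simp add: cofactor_unknowns_def)

lemma finite_cofactor_equations [simp]: "finite (cofactor_equations Ls M)"
  by (simp add: cofactor_equations_def)

lemma card_cofactor_unknowns:
  "card (cofactor_unknowns Ls M) = (\<Sum>i<length Ls. M - degree (Ls ! i) + 1)"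
  by (simp add: cofactor_unknowns_def)

lemma card_cofactor_equations:
  "Ls \<noteq> [] \<Longrightarrow> card (cofactor_equations Ls M) = (length Ls - 1) * (M + 1)"
  by (simp add: cofactor_equations_def card_cartesian_product)

lemma degree_cofactor_matrix_le:
  assumes "\<forall>L\<in>set Ls. degx L \<le> d"
  shows "\<forall>row\<in>cofactor_equations Ls M. \<forall>col\<in>cofactor_unknowns Ls M.
           degree (cofactor_matrix Ls row col) \<le> d"
proof (intro ballI)
  fix row col assume "row \<in> cofactor_equations Ls M" "col \<in> cofactor_unknowns Ls M"
  moreover have "degree (coeff ((dleft pderiv ^^ e) (Ls ! i)) n) \<le> d" if "i < length Ls" for i e n
    using degree_coeff_dleft_pow_le[OF order.trans[OF degree_coeff_le_degx]] assms that
    by (meson nth_mem)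
  ultimately show "degree (cofactor_matrix Ls row col) \<le> d"
    by (auto simp: cofactor_matrix_def cofactor_equations_def cofactor_unknowns_def
        intro!: order.trans[OF degree_diff_le_max])
qed

lemma sum_cofactor_matrix:
  fixes \<psi> :: "'a::field poly \<Rightarrow> 'b::comm_ring_1" and M n :: nat and z :: "nat \<times> nat \<Rightarrow> 'b"
  assumes \<psi>: "\<And>a b. \<psi> (a - b) = \<psi> a - \<psi> b" and i: "0 < i" "i < length Ls"
  defines "X \<equiv> \<lambda>i'. \<Sum>e\<le>M - degree (Ls ! i'). \<psi> (coeff ((dleft pderiv ^^ e) (Ls ! i')) n) * z (i', e)"
  shows "(\<Sum>col\<in>cofactor_unknowns Ls M. \<psi> (cofactor_matrix Ls (i, n) col) * z col) = X 0 - X i"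
proof -
  have "\<psi> 0 = 0" using \<psi>[of 0 0] by simp
  then have entry: "\<psi> (cofactor_matrix Ls (i, n) (i', e)) =
      (if i' = 0 then \<psi> (coeff ((dleft pderiv ^^ e) (Ls ! 0)) n) else 0)
      - (if i' = i then \<psi> (coeff ((dleft pderiv ^^ e) (Ls ! i)) n) else 0)" for i' e
    by (simp add: cofactor_matrix_def \<psi>)
  have "(\<Sum>col\<in>cofactor_unknowns Ls M. \<psi> (cofactor_matrix Ls (i, n) col) * z col)
      = (\<Sum>i'<length Ls. \<Sum>e\<le>M - degree (Ls ! i'). \<psi> (cofactor_matrix Ls (i, n) (i', e)) * z (i', e))"
    unfolding cofactor_unknowns_def by (subst sum.Sigma) auto
  also have "\<dots> = (\<Sum>i'<length Ls. (if i' = 0 then X 0 else 0) - (if i' = i then X i else 0))"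
    unfolding entry X_def by (rule sum.cong) (auto simp: left_diff_distrib sum_subtractf)
  also have "\<dots> = X 0 - X i" using i by (auto simp: sum_subtractf)
  finally show ?thesis .
qed

lemma coeff_cofactor:
  "coeff (cofactor Ls M v i) e = (if e \<le> M - degree (Ls ! i) then v (i, e) else 0)"
  by (simp add: cofactor_def coeff_sum coeff_monom)

lemma degree_cofactor_le: "degree (cofactor Ls M v i) \<le> M - degree (Ls ! i)"
  by (rule degree_le) (simp add: coeff_cofactor)

lemma coeff_omult_cofactor:
  "coeff (omult pderiv (cofactor Ls M v i) (Ls ! i)) n
     = (\<Sum>e\<le>M - degree (Ls ! i). coeff ((dleft pderiv ^^ e) (Ls ! i)) n * v (i, e))"
  unfolding coeff_omult[OF degree_cofactor_le]
  by (rule sum.cong) (simp_all add: coeff_cofactor mult.commute)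

lemma degx_omult_cofactor_le:
  assumes "degx (Ls ! i) \<le> d" "\<And>c. degree (v c) \<le> D"
    and "omult pderiv (cofactor Ls M v i) (Ls ! i) \<noteq> 0"
  shows "degx (omult pderiv (cofactor Ls M v i) (Ls ! i)) \<le> d + D"
proof (rule degx_le[OF assms(3)])
  fix n
  have "degree (coeff ((dleft pderiv ^^ e) (Ls ! i)) n * v (i, e)) \<le> d + D" for e
  proof -
    have "degree (coeff ((dleft pderiv ^^ e) (Ls ! i)) n) \<le> d"
      using degree_coeff_dleft_pow_le[OF order.trans[OF degree_coeff_le_degx assms(1)]] .
    then show ?thesis
      using degree_mult_le[of "coeff ((dleft pderiv ^^ e) (Ls ! i)) n" "v (i, e)"] assms(2)[of "(i, e)"]
      by linarith
  qed
  then show "degree (coeff (omult pderiv (cofactor Ls M v i) (Ls ! i)) n) \<le> d + D"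
    by (simp add: coeff_omult_cofactor degree_sum_le)
qed

lemma card_cofactor_unknowns_add:
  assumes "\<forall>L\<in>set Ls. degree L \<le> M"
  shows "card (cofactor_unknowns Ls M) + (\<Sum>i<length Ls. degree (Ls ! i)) = length Ls * (M + 1)"
proof -
  have "card (cofactor_unknowns Ls M) + (\<Sum>i<length Ls. degree (Ls ! i))
      = (\<Sum>i<length Ls. M - degree (Ls ! i) + 1 + degree (Ls ! i))"
    unfolding card_cofactor_unknowns sum.distrib[symmetric] by simp
  also have "\<dots> = (\<Sum>i<length Ls. M + 1)"
    using assms by (intro sum.cong) auto
  finally show ?thesis by simp
qed

lemma cofactor_products_eq:
  assumes ord: "\<forall>L\<in>set Ls. degree L \<le> M" and i: "i < length Ls"
    and sol: "\<forall>row\<in>cofactor_equations Ls M.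
               (\<Sum>col\<in>cofactor_unknowns Ls M. cofactor_matrix Ls row col * v col) = 0"
  shows "omult pderiv (cofactor Ls M v i) (Ls ! i) = omult pderiv (cofactor Ls M v 0) (Ls ! 0)"
proof (cases "i = 0")
  case False
  have deg: "degree (omult pderiv (cofactor Ls M v j) (Ls ! j)) \<le> M" if "j < length Ls" for j
  proof -
    have "degree (Ls ! j) \<le> M" using ord that by simp
    then show ?thesis
      using degree_omult_le[of pderiv "cofactor Ls M v j" "Ls ! j"] degree_cofactor_le[of Ls M v j]
      by linarith
  qed
  show ?thesis
  proof (rule poly_eqI)
    fix n
    show "coeff (omult pderiv (cofactor Ls M v i) (Ls ! i)) n
        = coeff (omult pderiv (cofactor Ls M v 0) (Ls ! 0)) n"
    proof (cases "n \<le> M")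
      case True
      then have "(i, n) \<in> cofactor_equations Ls M"
        using False i by (simp add: cofactor_equations_def)
      with sol have "(\<Sum>col\<in>cofactor_unknowns Ls M. cofactor_matrix Ls (i, n) col * v col) = 0"
        by blast
      moreover have "0 < i" using False by simp
      ultimately show ?thesis
        using sum_cofactor_matrix[where \<psi>=id and M=M and n=n and z=v, OF _ _ i]
        by (simp add: coeff_omult_cofactor)
    next
      case False
      have "0 < length Ls" using i by linarith
      with False deg[OF i] deg[of 0] show ?thesis
        by (simp add: coeff_eq_0 not_le order.strict_trans1)
    qed
  qed
qed simp

lemma common_left_multiple_of_solution:
  fixes Ls :: "'a::field poly poly list"
  assumes nz: "\<forall>L\<in>set Ls. L \<noteq> 0" and "Ls \<noteq> []"
    and ord: "\<forall>L\<in>set Ls. degree L \<le> M" and degx: "\<forall>L\<in>set Ls. degx L \<le> d"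
    and v: "\<exists>c\<in>cofactor_unknowns Ls M. v c \<noteq> 0" "\<forall>c. degree (v c) \<le> D"
    and sol: "\<forall>row\<in>cofactor_equations Ls M.
               (\<Sum>col\<in>cofactor_unknowns Ls M. cofactor_matrix Ls row col * v col) = 0"
  obtains L' where "L' \<noteq> 0" "degree L' \<le> M" "common_left_multiple Ls (fract_poly L')"
    "degx L' \<le> d + D"
proof -
  define L' where "L' = omult pderiv (cofactor Ls M v 0) (Ls ! 0)"
  have L0: "Ls ! 0 \<in> set Ls" using \<open>Ls \<noteq> []\<close> by simp
  have eq: "L' = omult pderiv (cofactor Ls M v i) (Ls ! i)" if "i < length Ls" for i
    unfolding L'_def using cofactor_products_eq[OF ord that sol] by simp
  obtain i e where "(i, e) \<in> cofactor_unknowns Ls M" "v (i, e) \<noteq> 0" using v(1) by auto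
  then have i: "i < length Ls" and "coeff (cofactor Ls M v i) e \<noteq> 0"
    by (auto simp: cofactor_unknowns_def coeff_cofactor)
  then have "cofactor Ls M v i \<noteq> 0" by auto
  moreover have "Ls ! i \<noteq> 0" using nz i by simp
  ultimately have "L' \<noteq> 0" using eq[OF i] by (simp add: omult_eq_0_iff)
  show ?thesis
  proof (rule that)
    show "L' \<noteq> 0" by fact
    have "degree (Ls ! 0) \<le> M" using ord L0 by blast
    then show "degree L' \<le> M"
      unfolding L'_def using degree_omult_le[of pderiv "cofactor Ls M v 0" "Ls ! 0"]
        degree_cofactor_le[of Ls M v 0] by linarith
    show "common_left_multiple Ls (fract_poly L')"
      using eq by (rule common_left_multiple_fract_poly)
    show "degx L' \<le> d + D"
      unfolding L'_def using degx L0 v(2) \<open>L' \<noteq> 0\<close>[unfolded L'_def]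
      by (intro degx_omult_cofactor_le) auto
  qed
qed

lemma fract_solution_of_cofactors:
  fixes Ls :: "'a::field poly poly list" and Q :: "nat \<Rightarrow> 'a poly fract poly"
  assumes QE: "\<And>i. i < length Ls \<Longrightarrow> E = omult fderiv (Q i) (fract_poly (Ls ! i))"
    and dQ: "\<And>i. i < length Ls \<Longrightarrow> degree (Q i) \<le> M - degree (Ls ! i)"
  shows "\<forall>row\<in>cofactor_equations Ls M. (\<Sum>col\<in>cofactor_unknowns Ls M.
           to_fract (cofactor_matrix Ls row col) * (\<lambda>(i, e). coeff (Q i) e) col) = 0"
proof
  fix row assume "row \<in> cofactor_equations Ls M"
  then obtain i n where row: "row = (i, n)" "0 < i" "i < length Ls"
    by (auto simp: cofactor_equations_def)
  have "coeff E n = (\<Sum>e\<le>M - degree (Ls ! j).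
          to_fract (coeff ((dleft pderiv ^^ e) (Ls ! j)) n) * coeff (Q j) e)"
    if "j < length Ls" for j
  proof -
    have "coeff E n = coeff (omult fderiv (Q j) (fract_poly (Ls ! j))) n" using QE[OF that] by simp
    also have "\<dots> = (\<Sum>e\<le>M - degree (Ls ! j).
                      coeff (Q j) e * coeff ((dleft fderiv ^^ e) (fract_poly (Ls ! j))) n)"
      using dQ[OF that] by (rule coeff_omult)
    finally show ?thesis by (simp add: dleft_pow_fract_poly coeff_map_poly mult.commute)
  qed
  note coeff_E = this
  have "0 < length Ls" using row by linarith
  then show "(\<Sum>col\<in>cofactor_unknowns Ls M.
           to_fract (cofactor_matrix Ls row col) * (\<lambda>(i, e). coeff (Q i) e) col) = 0"
    unfolding row(1) sum_cofactor_matrix[where \<psi>=to_fract, OF to_fract_diff row(2,3)]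
    using coeff_E[of 0] coeff_E[OF row(3)] by simp
qed

subsection \<open>Order and degree of the LCLM\<close>

lemma lclm_cofactors:
  assumes "is_lclm Ls L" "\<forall>Li\<in>set Ls. Li \<noteq> 0"
  obtains Q where "\<And>i. i < length Ls \<Longrightarrow> fract_poly L = omult fderiv (Q i) (fract_poly (Ls ! i))"
    "\<And>i. i < length Ls \<Longrightarrow> Q i \<noteq> 0"
    "\<And>i. i < length Ls \<Longrightarrow> degree (Q i) = degree L - degree (Ls ! i)"
    "\<forall>Li\<in>set Ls. degree Li \<le> degree L"
proof -
  have "\<forall>i\<in>{..<length Ls}. \<exists>Q. fract_poly L = omult fderiv Q (fract_poly (Ls ! i))"
    using is_lclmD(2)[OF assms(1)] by (simp add: common_left_multiple_def)
  from bchoice[OF this] obtain Q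
    where Q: "\<And>i. i < length Ls \<Longrightarrow> fract_poly L = omult fderiv (Q i) (fract_poly (Ls ! i))"
    by auto
  have "fract_poly L \<noteq> 0" using is_lclmD(1)[OF assms(1)] by simp
  have Q_deg: "Q i \<noteq> 0 \<and> degree (Q i) + degree (Ls ! i) = degree L" if "i < length Ls" for i
  proof -
    have "Ls ! i \<noteq> 0" using assms(2) that by simp
    from left_factor_degree[OF Q[OF that] \<open>fract_poly L \<noteq> 0\<close> this] show ?thesis by simp
  qed
  show ?thesis
  proof (rule that[OF Q])
    fix i assume "i < length Ls"
    from Q_deg[OF this] show "Q i \<noteq> 0" "degree (Q i) = degree L - degree (Ls ! i)" by auto
  next
    show "\<forall>Li\<in>set Ls. degree Li \<le> degree L"
      using Q_deg by (fastforce simp: in_set_conv_nth)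
  qed
qed

lemma lclm_order_le:
  fixes Ls :: "'a::field poly poly list"
  assumes lclm: "is_lclm Ls L" and "Ls \<noteq> []" and nz: "\<forall>Li\<in>set Ls. Li \<noteq> 0"
  shows "degree L \<le> (\<Sum>i<length Ls. degree (Ls ! i))"
proof -
  define s where "s = (\<Sum>i<length Ls. degree (Ls ! i))"
  define d where "d = Max (degx ` set Ls)"
  have ord: "\<forall>Li\<in>set Ls. degree Li \<le> s"
    unfolding s_def by (auto simp: in_set_conv_nth intro: member_le_sum)
  have degx: "\<forall>Li\<in>set Ls. degx Li \<le> d" unfolding d_def by simp
  have "card (cofactor_equations Ls s) < card (cofactor_unknowns Ls s)"
    using card_cofactor_unknowns_add[OF ord] card_cofactor_equations[OF \<open>Ls \<noteq> []\<close>, of s]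
      \<open>Ls \<noteq> []\<close>
    by (cases "length Ls") (simp_all add: s_def algebra_simps)
  with degree_cofactor_matrix_le[OF degx] obtain v where v: "\<exists>c\<in>cofactor_unknowns Ls s. v c \<noteq> 0"
    "\<forall>c. degree (v c) \<le> d * (card (cofactor_unknowns Ls s) - 1)"
    "\<forall>row\<in>cofactor_equations Ls s.
       (\<Sum>col\<in>cofactor_unknowns Ls s. cofactor_matrix Ls row col * v col) = 0"
    by (elim bounded_polynomial_solution[OF finite_cofactor_equations finite_cofactor_unknowns])
  then obtain L' where "L' \<noteq> 0" "degree L' \<le> s" "common_left_multiple Ls (fract_poly L')"
    by (elim common_left_multiple_of_solution[OF nz \<open>Ls \<noteq> []\<close> ord degx])
  then show ?thesis
    using is_lclmD(3)[OF lclm, of "fract_poly L'"] unfolding s_def by simp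
qed

lemma lclm_degx_le:
  fixes Ls :: "'a::field poly poly list"
  assumes lclm: "is_lclm Ls L" and "Ls \<noteq> []" and nz: "\<forall>Li\<in>set Ls. Li \<noteq> 0"
    and degx: "\<forall>Li\<in>set Ls. degx Li \<le> d"
  shows "degx L \<le> d * card (cofactor_unknowns Ls (degree L))"
proof -
  obtain Q where Q: "\<And>i. i < length Ls \<Longrightarrow> fract_poly L = omult fderiv (Q i) (fract_poly (Ls ! i))"
    and Q0: "\<And>i. i < length Ls \<Longrightarrow> Q i \<noteq> 0"
    and Q_deg: "\<And>i. i < length Ls \<Longrightarrow> degree (Q i) = degree L - degree (Ls ! i)"
    and ord: "\<forall>Li\<in>set Ls. degree Li \<le> degree L"
    by (rule lclm_cofactors[OF lclm nz], rule that)
  define m where "m = degree L"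
  define N where "N = card (cofactor_unknowns Ls m)"
  note Q_deg = Q_deg[folded m_def] and ord = ord[folded m_def]
  have "0 < length Ls" using \<open>Ls \<noteq> []\<close> by simp
  text \<open>The top coefficient of \<open>Q\<^sub>0\<close> is a nonzero entry of the rational solution.\<close>
  define j0 where "j0 = (0::nat, m - degree (Ls ! 0))"
  have j0: "j0 \<in> cofactor_unknowns Ls m" "(\<lambda>(i, e). coeff (Q i) e) j0 \<noteq> 0"
    using \<open>0 < length Ls\<close> Q0 Q_deg[symmetric]
    by (simp_all add: j0_def cofactor_unknowns_def)
  have "degree (Q i) \<le> m - degree (Ls ! i)" if "i < length Ls" for i
    using Q_deg[OF that] by simp
  with Q have "\<forall>row\<in>cofactor_equations Ls m. (\<Sum>col\<in>cofactor_unknowns Ls m.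
          to_fract (cofactor_matrix Ls row col) * (\<lambda>(i, e). coeff (Q i) e) col) = 0"
    by (rule fract_solution_of_cofactors)
  with degree_cofactor_matrix_le[OF degx] obtain v where "\<exists>c\<in>cofactor_unknowns Ls m. v c \<noteq> 0"
    "\<forall>c. degree (v c) \<le> d * (N - 1)"
    "\<forall>row\<in>cofactor_equations Ls m.
       (\<Sum>col\<in>cofactor_unknowns Ls m. cofactor_matrix Ls row col * v col) = 0"
    unfolding N_def
    by (elim polynomial_solution_of_fract_solution[where w="\<lambda>(i, e). coeff (Q i) e",
          OF finite_cofactor_equations finite_cofactor_unknowns j0])
  then obtain L' where L': "L' \<noteq> 0" "degree L' \<le> m" "common_left_multiple Ls (fract_poly L')"
    "degx L' \<le> d + d * (N - 1)"
    by (elim common_left_multiple_of_solution[OF nz \<open>Ls \<noteq> []\<close> ord degx])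
  have "degx L \<le> degx L'" using is_lclm_degx_le[OF lclm L'(3,1)] L'(2) unfolding m_def .
  also have "\<dots> \<le> d * N"
  proof -
    have "N \<noteq> 0" using j0(1) by (auto simp: N_def)
    then show ?thesis using L'(4) by (cases N) simp_all
  qed
  finally show ?thesis by (simp add: N_def m_def)
qed

theorem theorem4:
  fixes Ls :: "'a::field poly poly list" and L :: "'a poly poly"
  assumes "Ls \<noteq> []"
    and "\<forall>Li\<in>set Ls. Li \<noteq> 0"
    and "is_lclm Ls L"
  shows "degx L \<le> Max (degx ` set Ls) *
           (length Ls * ((\<Sum>Li\<leftarrow>Ls. degree Li) + 1) - (\<Sum>Li\<leftarrow>Ls. degree Li))"
proof -
  define s where "s = (\<Sum>Li\<leftarrow>Ls. degree Li)"
  have s: "s = (\<Sum>i<length Ls. degree (Ls ! i))"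
    unfolding s_def by (simp add: sum_list_sum_nth atLeast0LessThan)
  have "degree L \<le> s" using lclm_order_le[OF assms(3,1,2)] s by simp
  have ord: "\<forall>Li\<in>set Ls. degree Li \<le> s"
    unfolding s_def by (simp add: member_le_sum_list)
  have "degx L \<le> Max (degx ` set Ls) * card (cofactor_unknowns Ls (degree L))"
    using lclm_degx_le[OF assms(3,1,2)] by simp
  also have "card (cofactor_unknowns Ls (degree L)) \<le> card (cofactor_unknowns Ls s)"
    unfolding card_cofactor_unknowns using \<open>degree L \<le> s\<close> by (intro sum_mono) simp
  also have "\<dots> = length Ls * (s + 1) - s"
    using card_cofactor_unknowns_add[OF ord] s by simp
  finally show ?thesis unfolding s_def by simp
qed

end
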